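(* Let $\mathcal{M}=(S,\mathcal{I})$ be a courteously colored matroid of rank $r$ such that for every $s\in S$, the matroid $\mathcal{M}\setminus\{s\}$ (obtained by deleting $s$) is not courteously colored. Then $|S|\le 2r$, and this upper bound is sharp (for every positive integer $r$ there is such a matroid with $|S|=2r$).
   Context: A coloring of a matroid assigns a color to each element of its ground set; deletions inherit colors. For a color $c$, $\mathcal{M}_{\overline{c}}$ is the matroid obtained by deleting all elements of color $c$. A colored matroid $\mathcal{M}$ is courteously colored if for every color $c$, the rank of $\mathcal{M}_{\overline{c}}$ equals the rank of $\mathcal{M}$. *)

theory Defs
  imports Main
begin

definition matroid :: "'a set \<Rightarrow> ('a set \<Rightarrow> bool) \<Rightarrow> bool" where
  "matroid S indep \<longleftrightarrow>
     finite S \<and>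
     (\<forall>I. indep I \<longrightarrow> I \<subseteq> S) \<and>
     indep {} \<and>
     (\<forall>I J. indep J \<and> I \<subseteq> J \<longrightarrow> indep I) \<and>
     (\<forall>I J. indep I \<and> indep J \<and> card I < card J \<longrightarrow> (\<exists>x\<in>J - I. indep (insert x I)))"

definition rk :: "('a set \<Rightarrow> bool) \<Rightarrow> 'a set \<Rightarrow> nat" where
  "rk indep A = Max {card I | I. I \<subseteq> A \<and> indep I}"

definition mrank :: "'a set \<Rightarrow> ('a set \<Rightarrow> bool) \<Rightarrow> nat" where
  "mrank S indep = rk indep S"

definition del_ground :: "'a set \<Rightarrow> 'a set \<Rightarrow> 'a set" where
  "del_ground S X = S - X"

definition del_indep :: "('a set \<Rightarrow> bool) \<Rightarrow> 'a set \<Rightarrow> 'a set \<Rightarrow> bool" where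
  "del_indep indep X = (\<lambda>I. indep I \<and> I \<inter> X = {})"

definition courteous :: "'a set \<Rightarrow> ('a set \<Rightarrow> bool) \<Rightarrow> ('a \<Rightarrow> 'c) \<Rightarrow> bool" where
  "courteous S indep col \<longleftrightarrow>
     (\<forall>c. mrank (del_ground S (col -` {c})) (del_indep indep (col -` {c})) = mrank S indep)"

end

theory Submission
  imports Defs
begin

text \<open>Fix a basis \<open>B\<close> and, for every colour \<open>c\<close>, a basis \<open>J c\<close> of \<open>S\<close> minus the colour class
  of \<open>c\<close> that extends \<open>B\<close> minus that class; it exists by courtesy. Since \<open>J c\<close> and \<open>B\<close> have
  the same size, \<open>J c\<close> has at most as many elements outside \<open>B\<close> as \<open>B\<close> has of colour \<open>c\<close>.
  Minimality says that every element \<open>s\<close> is needed, for some colour \<open>c\<close>, to keep the rank of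
  \<open>S - {s}\<close> after deleting the class of \<open>c\<close>, so \<open>s\<close> lies in \<open>J c\<close>. Hence \<open>S\<close> is covered by
  \<open>B\<close> and the sets \<open>J c - B\<close>, of total size at most \<open>2 |B|\<close>. Sharpness: the uniform matroid
  of rank \<open>r\<close> on \<open>2r\<close> elements, split into two colour classes of size \<open>r\<close>.\<close>

lemma rk_del_indep: "A \<inter> X = {} \<Longrightarrow> rk (del_indep indep X) A = rk indep A"
  unfolding rk_def del_indep_def by (metis (no_types, lifting) disjoint_iff subsetD)

lemma courteous_iff_rk:
  "courteous S indep col \<longleftrightarrow> (\<forall>c. rk indep (S - col -` {c}) = rk indep S)"
proof -
  have "rk (del_indep indep (col -` {c})) (S - col -` {c}) = rk indep (S - col -` {c})" for c
    by (rule rk_del_indep) blast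
  then show ?thesis
    unfolding courteous_def mrank_def del_ground_def by simp
qed

lemma courteous_del_singleton_iff_rk:
  "courteous (del_ground S {s}) (del_indep indep {s}) col \<longleftrightarrow>
    (\<forall>c. rk indep (S - {s} - col -` {c}) = rk indep (S - {s}))"
  unfolding courteous_iff_rk del_ground_def by (simp add: rk_del_indep Diff_disjoint Int_commute)

lemma card_Diff_le_card_Int_if_same_card:
  assumes "finite B" "finite J" "card J = card B" "B - X \<subseteq> J"
  shows "card (J - B) \<le> card (B \<inter> X)"
proof -
  have "card B - card (B \<inter> X) = card (B - X)"
    using assms(1) by (simp add: card_Diff_subset_Int Diff_Int2 Int_commute)
  also have "\<dots> \<le> card (J \<inter> B)"
    using assms by (intro card_mono) auto
  finally show ?thesis
    using assms(1-3) card_mono[OF assms(1), of "B \<inter> X"]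
    by (simp add: card_Diff_subset_Int Int_commute)
qed

lemma card_le_twice_card_if_colourwise_cover:
  assumes "finite B" "\<And>c. finite (K c)" "S \<subseteq> B \<union> (\<Union>c\<in>col ` B. K c)"
    and "\<And>c. card (K c) \<le> card (B \<inter> col -` {c})"
  shows "card S \<le> 2 * card B"
proof -
  have "card S \<le> card (B \<union> (\<Union>c\<in>col ` B. K c))"
    using assms(1-3) by (intro card_mono) auto
  also have "\<dots> \<le> card B + card (\<Union>c\<in>col ` B. K c)"
    by (rule card_Un_le)
  also have "card (\<Union>c\<in>col ` B. K c) \<le> (\<Sum>c\<in>col ` B. card (K c))"
    using assms(1) by (intro card_UN_le) simp
  also have "\<dots> \<le> (\<Sum>c\<in>col ` B. card (B \<inter> col -` {c}))"
    by (intro sum_mono assms(4))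
  also have "\<dots> = card (\<Union>c\<in>col ` B. B \<inter> col -` {c})"
    using assms(1) by (intro card_UN_disjoint[symmetric]) auto
  also have "(\<Union>c\<in>col ` B. B \<inter> col -` {c}) = B"
    by blast
  finally show ?thesis
    by simp
qed

context
  fixes S :: "'a set" and indep :: "'a set \<Rightarrow> bool"
  assumes matroid: "matroid S indep"
begin

lemma indep_subset_ground: "indep I \<Longrightarrow> I \<subseteq> S"
  using matroid unfolding matroid_def by blast

lemma finite_ground: "finite S"
  using matroid unfolding matroid_def by blast

lemma indep_finite: "indep I \<Longrightarrow> finite I"
  using finite_ground indep_subset_ground by (rule finite_subset[rotated])

lemma indep_subset: "indep J \<Longrightarrow> I \<subseteq> J \<Longrightarrow> indep I"
  using matroid unfolding matroid_def by blast

lemma indep_augment: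
  "indep I \<Longrightarrow> indep J \<Longrightarrow> card I < card J \<Longrightarrow> \<exists>x\<in>J - I. indep (insert x I)"
  using matroid unfolding matroid_def by blast

lemma finite_card_indep_subsets: "finite {card I |I. I \<subseteq> A \<and> indep I}"
proof (rule finite_subset)
  show "{card I |I. I \<subseteq> A \<and> indep I} \<subseteq> {..card S}"
    using card_mono[OF finite_ground indep_subset_ground] by auto
qed simp

lemma card_le_rk: "indep I \<Longrightarrow> I \<subseteq> A \<Longrightarrow> card I \<le> rk indep A"
  unfolding rk_def using finite_card_indep_subsets by (auto intro!: Max_ge)

lemma obtain_indep_card_rk:
  obtains I where "I \<subseteq> A" "indep I" "card I = rk indep A"
proof -
  have "indep {}"
    using matroid unfolding matroid_def by blast
  then have "{card I |I. I \<subseteq> A \<and> indep I} \<noteq> {}"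
    by blast
  then have "rk indep A \<in> {card I |I. I \<subseteq> A \<and> indep I}"
    unfolding rk_def by (rule Max_in[OF finite_card_indep_subsets])
  then show thesis
    using that by auto
qed

lemma rk_mono:
  assumes "A \<subseteq> B"
  shows "rk indep A \<le> rk indep B"
proof -
  obtain I where "I \<subseteq> A" "indep I" "card I = rk indep A"
    by (rule obtain_indep_card_rk)
  with assms show ?thesis
    using card_le_rk[of I B] by auto
qed

lemma indep_extend_to_rk:
  assumes "indep I" "I \<subseteq> A"
  shows "\<exists>J. I \<subseteq> J \<and> J \<subseteq> A \<and> indep J \<and> card J = rk indep A"
  using assms
proof (induction "rk indep A - card I" arbitrary: I rule: less_induct)
  case less
  show ?case
  proof (cases "card I < rk indep A")
    case False
    with card_le_rk[OF less.prems] have "card I = rk indep A"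
      by simp
    with less.prems show ?thesis
      by blast
  next
    case True
    obtain K where K: "K \<subseteq> A" "indep K" "card K = rk indep A"
      by (rule obtain_indep_card_rk)
    with True obtain x where x: "x \<in> K - I" "indep (insert x I)"
      using indep_augment[OF less.prems(1) K(2)] by auto
    have "card (insert x I) = Suc (card I)"
      using x indep_finite[OF less.prems(1)] by simp
    with True have "rk indep A - card (insert x I) < rk indep A - card I"
      by simp
    moreover have "insert x I \<subseteq> A"
      using x K(1) less.prems(2) by blast
    ultimately obtain J where "insert x I \<subseteq> J" "J \<subseteq> A" "indep J" "card J = rk indep A"
      using less.hyps[OF _ x(2)] by blast
    then show ?thesis
      by blast
  qed
qed

lemma mem_indep_if_rk_drops:
  assumes "J \<subseteq> A - X" "indep J" "card J = rk indep A"
    and "rk indep (A - {s} - X) \<noteq> rk indep (A - {s})"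
  shows "s \<in> J"
proof (rule ccontr)
  assume "s \<notin> J"
  then have "J \<subseteq> A - {s} - X"
    using assms(1) by blast
  then have "rk indep A \<le> rk indep (A - {s} - X)"
    using assms(2,3) card_le_rk by fastforce
  moreover have "rk indep (A - {s} - X) \<le> rk indep (A - {s})" "rk indep (A - {s}) \<le> rk indep A"
    by (auto intro: rk_mono)
  ultimately show False
    using assms(4) by linarith
qed

lemma card_le_twice_rk_if_minimal_courteous:
  fixes col :: "'a \<Rightarrow> 'c"
  assumes courteous: "\<And>c. rk indep (S - col -` {c}) = rk indep S"
    and minimal: "\<And>s. s \<in> S \<Longrightarrow> \<exists>c. rk indep (S - {s} - col -` {c}) \<noteq> rk indep (S - {s})"
  shows "card S \<le> 2 * rk indep S"
proof -
  obtain B where B: "B \<subseteq> S" "indep B" "card B = rk indep S"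
    by (rule obtain_indep_card_rk)
  have "\<exists>J. B - col -` {c} \<subseteq> J \<and> J \<subseteq> S - col -` {c} \<and> indep J \<and> card J = rk indep S" for c
  proof -
    have "indep (B - col -` {c})" "B - col -` {c} \<subseteq> S - col -` {c}"
      using B indep_subset by auto
    then show ?thesis
      using indep_extend_to_rk courteous by metis
  qed
  then obtain J where J: "\<And>c. B - col -` {c} \<subseteq> J c" "\<And>c. J c \<subseteq> S - col -` {c}"
      "\<And>c. indep (J c)" "\<And>c. card (J c) = rk indep S"
    by metis
  have "finite B" "\<And>c. finite (J c)"
    using B(2) J(3) indep_finite by auto
  have J_outside_B: "card (J c - B) \<le> card (B \<inter> col -` {c})" for c
    using card_Diff_le_card_Int_if_same_card[OF \<open>finite B\<close> \<open>finite (J c)\<close>] J(1,4) B(3)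
    by simp
  have "S \<subseteq> B \<union> (\<Union>c\<in>col ` B. J c - B)"
  proof
    fix s assume "s \<in> S"
    then obtain c where "rk indep (S - {s} - col -` {c}) \<noteq> rk indep (S - {s})"
      using minimal by blast
    then have "s \<in> J c"
      using mem_indep_if_rk_drops[OF J(2-4)] by blast
    moreover have "J c - B = {}" if "c \<notin> col ` B"
    proof -
      from that have "B \<inter> col -` {c} = {}"
        by blast
      then show ?thesis
        using J_outside_B[of c] \<open>finite (J c)\<close> by simp
    qed
    ultimately show "s \<in> B \<union> (\<Union>c\<in>col ` B. J c - B)"
      by blast
  qed
  then have "card S \<le> 2 * card B"
    using \<open>\<And>c. finite (J c)\<close>
    by (intro card_le_twice_card_if_colourwise_cover[where K = "\<lambda>c. J c - B" and col = col]
        \<open>finite B\<close> J_outside_B) auto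
  with B(3) show ?thesis
    by simp
qed

end

definition uniform_indep :: "nat \<Rightarrow> 'a set \<Rightarrow> 'a set \<Rightarrow> bool" where
  "uniform_indep r E I \<longleftrightarrow> I \<subseteq> E \<and> card I \<le> r"

lemma matroid_uniform:
  assumes "finite E"
  shows "matroid E (uniform_indep r E)"
  unfolding matroid_def
proof (intro conjI allI impI)
  fix I J assume "uniform_indep r E J \<and> I \<subseteq> J"
  then have "I \<subseteq> J" "J \<subseteq> E" "card J \<le> r"
    unfolding uniform_indep_def by auto
  moreover have "card I \<le> card J"
    using calculation assms by (intro card_mono) (auto intro: finite_subset)
  ultimately show "uniform_indep r E I"
    unfolding uniform_indep_def by auto
next
  fix I J assume indep: "uniform_indep r E I \<and> uniform_indep r E J \<and> card I < card J"
  then have "finite I"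
    using assms finite_subset unfolding uniform_indep_def by blast
  with indep have "\<not> J \<subseteq> I"
    using card_mono[of I J] by auto
  then obtain x where x: "x \<in> J - I"
    by blast
  with indep \<open>finite I\<close> have "uniform_indep r E (insert x I)"
    unfolding uniform_indep_def by auto
  with x show "\<exists>x\<in>J - I. uniform_indep r E (insert x I)"
    by blast
qed (use assms in \<open>auto simp: uniform_indep_def\<close>)

lemma rk_uniform:
  assumes "finite E" "A \<subseteq> E"
  shows "rk (uniform_indep r E) A = min (card A) r"
proof -
  have "finite A"
    using assms finite_subset by blast
  have "{card I |I. I \<subseteq> A \<and> uniform_indep r E I} = {..min (card A) r}"
  proof (intro equalityI subsetI)
    fix k assume "k \<in> {card I |I. I \<subseteq> A \<and> uniform_indep r E I}"
    then show "k \<in> {..min (card A) r}"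
      using \<open>finite A\<close> card_mono unfolding uniform_indep_def by fastforce
  next
    fix k assume "k \<in> {..min (card A) r}"
    then obtain I where "I \<subseteq> A" "card I = k" "k \<le> r"
      using obtain_subset_with_card_n[of k A] by auto
    then show "k \<in> {card I |I. I \<subseteq> A \<and> uniform_indep r E I}"
      using assms(2) unfolding uniform_indep_def by blast
  qed
  moreover have "Max {..min (card A) r} = min (card A) r"
    by (rule Max_eqI) auto
  ultimately show ?thesis
    unfolding rk_def by simp
qed

lemma minimal_courteous_uniform_example:
  assumes "r > 0"
  defines "S \<equiv> {0..<2 * r}" and "col \<equiv> \<lambda>x::nat. if x < r then 0 else 1 :: nat"
  shows "matroid S (uniform_indep r S)" "courteous S (uniform_indep r S) col"
    "\<forall>s\<in>S. \<not> courteous (del_ground S {s}) (del_indep (uniform_indep r S) {s}) col"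
    "mrank S (uniform_indep r S) = r" "card S = 2 * r"
proof -
  have rk: "rk (uniform_indep r S) A = min (card A) r" if "A \<subseteq> S" for A
    using rk_uniform that unfolding S_def by blast
  show "matroid S (uniform_indep r S)"
    unfolding S_def by (simp add: matroid_uniform)
  show "card S = 2 * r"
    unfolding S_def by simp
  then show "mrank S (uniform_indep r S) = r"
    unfolding mrank_def by (simp add: rk)
  have "r \<le> card (S - col -` {c})" for c
  proof -
    have "{0..<r} \<subseteq> S - col -` {c} \<or> {r..<2 * r} \<subseteq> S - col -` {c}"
      unfolding S_def col_def by auto
    then show ?thesis
      using card_mono[of "S - col -` {c}" "{0..<r}"] card_mono[of "S - col -` {c}" "{r..<2 * r}"]
      unfolding S_def by auto
  qed
  then show "courteous S (uniform_indep r S) col"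
    unfolding courteous_iff_rk using \<open>card S = 2 * r\<close> by (simp add: rk)
  show "\<forall>s\<in>S. \<not> courteous (del_ground S {s}) (del_indep (uniform_indep r S) {s}) col"
  proof
    fix s assume "s \<in> S"
    define c :: nat where "c = (if s < r then 1 else 0)"
    have "S - {s} - col -` {c} = (if s < r then {0..<r} else {r..<2 * r}) - {s}"
      unfolding S_def c_def col_def by auto
    then have "card (S - {s} - col -` {c}) = r - 1"
      using \<open>s \<in> S\<close> unfolding S_def by auto
    moreover have "card (S - {s}) = 2 * r - 1"
      using \<open>s \<in> S\<close> \<open>card S = 2 * r\<close> by simp
    moreover have "S - {s} - col -` {c} \<subseteq> S" "S - {s} \<subseteq> S"
      by auto
    ultimately have "rk (uniform_indep r S) (S - {s} - col -` {c}) \<noteq> rk (uniform_indep r S) (S - {s})"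
      using \<open>r > 0\<close> by (simp add: rk)
    then show "\<not> courteous (del_ground S {s}) (del_indep (uniform_indep r S) {s}) col"
      unfolding courteous_del_singleton_iff_rk by blast
  qed
qed

theorem corollary3p8:
  shows "(\<forall>(S :: 'a set) indep (col :: 'a \<Rightarrow> 'c).
            matroid S indep \<and> courteous S indep col \<and>
            (\<forall>s\<in>S. \<not> courteous (del_ground S {s}) (del_indep indep {s}) col)
            \<longrightarrow> card S \<le> 2 * mrank S indep)
       \<and> (\<forall>r::nat. r > 0 \<longrightarrow>
            (\<exists>(S :: nat set) indep (col :: nat \<Rightarrow> nat).
               matroid S indep \<and> courteous S indep col \<and>
               (\<forall>s\<in>S. \<not> courteous (del_ground S {s}) (del_indep indep {s}) col) \<and>
               mrank S indep = r \<and> card S = 2 * r))"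
proof (intro conjI allI impI; (elim conjE)?)
  fix S :: "'a set" and indep and col :: "'a \<Rightarrow> 'c"
  assume matroid: "matroid S indep" and courteous: "courteous S indep col"
    and minimal: "\<forall>s\<in>S. \<not> courteous (del_ground S {s}) (del_indep indep {s}) col"
  have "rk indep (S - col -` {c}) = rk indep S" for c
    using courteous by (simp add: courteous_iff_rk)
  moreover have "\<exists>c. rk indep (S - {s} - col -` {c}) \<noteq> rk indep (S - {s})" if "s \<in> S" for s
    using minimal that by (simp add: courteous_del_singleton_iff_rk)
  ultimately show "card S \<le> 2 * mrank S indep"
    unfolding mrank_def by (rule card_le_twice_rk_if_minimal_courteous[OF matroid])
next
  fix r :: nat
  assume "r > 0"
  from minimal_courteous_uniform_example[OF this]
  show "\<exists>(S :: nat set) indep (col :: nat \<Rightarrow> nat).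
      matroid S indep \<and> courteous S indep col \<and>
      (\<forall>s\<in>S. \<not> courteous (del_ground S {s}) (del_indep indep {s}) col) \<and>
      mrank S indep = r \<and> card S = 2 * r"
    by blast
qed

end
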